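(* Let $g\in H(\mathbb{D})$ and let $\nu,\mu$ be weights. Then the following are equivalent: (1) $S_g: \mathcal{B}^{\infty}_\nu\rightarrow \mathcal{B}^{\infty}_\mu$ is bounded; (2) $\sup_{z\in\mathbb{D}}|g(z)|\,\mu(z)/\widetilde{\nu}(z)<\infty$. If, in addition, $\nu$ and $\mu$ are typical weights, then (1) and (2) are also equivalent to (3) $S_g: \mathcal{B}^{0}_\nu\rightarrow \mathcal{B}^{0}_\mu$ is bounded.
   Context: $\mathbb{D}$ is the open unit disk and $H(\mathbb{D})$ the space of analytic functions on $\mathbb{D}$. A weight is a non-negative continuous function $\nu$ on $\mathbb{D}$ with $\nu(z)=\nu(|z|)$ for all $z$, which is decreasing in $|z|$. For a weight $\nu$: $H^{\infty}_\nu=\{f\in H(\mathbb{D}): \|f\|_{H^\infty_\nu}=\sup_{z}\nu(z)|f(z)|<\infty\}$; $\mathcal{B}^{\infty}_\nu=\{f\in H(\mathbb{D}): \|f\|=|f(0)|+\sup_{z}\nu(z)|f'(z)|<\infty\}$; $\mathcal{B}^{0}_\nu=\{f\in H(\mathbb{D}): \lim_{|z|\to1^-}\nu(z)|f'(z)|=0\}$ (with the norm of $\mathcal{B}^\infty_\nu$). The associated weight of $\nu$ is $\widetilde{\nu}(z)=1/\sup\{|f(z)|: f\in H^\infty_\nu,\ \|f\|_{H^\infty_\nu}\le 1\}$. A weight $\nu$ is typical if $\lim_{|z|\to1^-}\nu(z)=0$. For $g\in H(\mathbb{D})$, $(S_gf)(z)=\int_0^z f'(\omega)g(\omega)\,d\omega$.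 *)

theory Defs
  imports "HOL-Complex_Analysis.Complex_Analysis"
begin

abbreviation unit_disc :: "complex set" where
  "unit_disc \<equiv> ball 0 1"

definition weight :: "(complex \<Rightarrow> real) \<Rightarrow> bool" where
  "weight \<nu> \<longleftrightarrow>
     continuous_on unit_disc \<nu> \<and>
     (\<forall>z\<in>unit_disc. 0 \<le> \<nu> z) \<and>
     (\<forall>z\<in>unit_disc. \<nu> z = \<nu> (complex_of_real (cmod z))) \<and>
     (\<forall>z\<in>unit_disc. \<forall>w\<in>unit_disc. cmod z \<le> cmod w \<longrightarrow> \<nu> w \<le> \<nu> z)"

definition typical_weight :: "(complex \<Rightarrow> real) \<Rightarrow> bool" where
  "typical_weight \<nu> \<longleftrightarrow> weight \<nu> \<and>
     (\<forall>e>0. \<exists>r<1. \<forall>z\<in>unit_disc. r < cmod z \<longrightarrow> \<bar>\<nu> z\<bar> < e)"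

definition Hinf :: "(complex \<Rightarrow> real) \<Rightarrow> (complex \<Rightarrow> complex) set" where
  "Hinf \<nu> = {f. f holomorphic_on unit_disc \<and> bdd_above ((\<lambda>z. \<nu> z * cmod (f z)) ` unit_disc)}"

definition Hinf_norm :: "(complex \<Rightarrow> real) \<Rightarrow> (complex \<Rightarrow> complex) \<Rightarrow> real" where
  "Hinf_norm \<nu> f = (SUP z\<in>unit_disc. \<nu> z * cmod (f z))"

text \<open>Associated weight, valued in the extended reals (1/infinity = 0).\<close>
definition assoc_weight :: "(complex \<Rightarrow> real) \<Rightarrow> complex \<Rightarrow> ereal" where
  "assoc_weight \<nu> z =
     1 / (SUP f\<in>{f\<in>Hinf \<nu>. Hinf_norm \<nu> f \<le> 1}. ereal (cmod (f z)))"

definition Bloch_inf :: "(complex \<Rightarrow> real) \<Rightarrow> (complex \<Rightarrow> complex) set" where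
  "Bloch_inf \<nu> = {f. f holomorphic_on unit_disc \<and>
       bdd_above ((\<lambda>z. \<nu> z * cmod (deriv f z)) ` unit_disc)}"

definition Bloch_0 :: "(complex \<Rightarrow> real) \<Rightarrow> (complex \<Rightarrow> complex) set" where
  "Bloch_0 \<nu> = {f. f holomorphic_on unit_disc \<and>
       (\<forall>e>0. \<exists>r<1. \<forall>z\<in>unit_disc. r < cmod z \<longrightarrow> \<nu> z * cmod (deriv f z) < e)}"

definition Bloch_norm :: "(complex \<Rightarrow> real) \<Rightarrow> (complex \<Rightarrow> complex) \<Rightarrow> real" where
  "Bloch_norm \<nu> f = cmod (f 0) + (SUP z\<in>unit_disc. \<nu> z * cmod (deriv f z))"

definition S_op :: "(complex \<Rightarrow> complex) \<Rightarrow> (complex \<Rightarrow> complex) \<Rightarrow> complex \<Rightarrow> complex" where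
  "S_op g f z = contour_integral (linepath 0 z) (\<lambda>w. deriv f w * g w)"

definition bounded_op ::
  "('a \<Rightarrow> 'b) \<Rightarrow> 'a set \<Rightarrow> ('a \<Rightarrow> real) \<Rightarrow> 'b set \<Rightarrow> ('b \<Rightarrow> real) \<Rightarrow> bool" where
  "bounded_op T X nX Y nY \<longleftrightarrow> (\<forall>f\<in>X. T f \<in> Y) \<and> (\<exists>C. \<forall>f\<in>X. nY (T f) \<le> C * nX f)"

end

theory Submission
  imports Defs
begin

text \<open>
  Since \<open>S\<^sub>g f (0) = 0\<close> and \<open>(S\<^sub>g f)' = g f'\<close>, and differentiation maps
  \<open>\<B>\<^sup>\<infinity>\<^sub>\<nu>\<close> modulo constants isometrically onto \<open>H\<^sup>\<infinity>\<^sub>\<nu>\<close> (the inverse being the primitive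
  vanishing at 0), \<open>S\<^sub>g\<close> is bounded on the Bloch spaces exactly when multiplication by \<open>g\<close>
  is bounded from \<open>H\<^sup>\<infinity>\<^sub>\<nu>\<close> to \<open>H\<^sup>\<infinity>\<^sub>\<mu>\<close>.  By the definition of the associated weight,
  \<open>|g(z)| \<mu>(z) / \<nu>\<^sup>~(z)\<close> is the supremum of \<open>\<mu>(z) |g(z) h(z)|\<close> over the unit ball of
  \<open>H\<^sup>\<infinity>\<^sub>\<nu>\<close>, so this multiplier condition is condition (2).

  For the little spaces, the unit ball of \<open>H\<^sup>\<infinity>\<^sub>\<nu>\<close> is tested through the dilations
  \<open>h(t\<cdot>)\<close>, \<open>t < 1\<close>, whose primitives lie in \<open>\<B>\<^sup>0\<^sub>\<nu>\<close> with norm at most 1 by the maximum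
  modulus principle (\<open>\<nu>\<close> is constant on circles).  Conversely, testing the multiplier
  condition with \<open>z\<^sup>n\<close> shows that \<open>\<mu> |g|\<close> vanishes at the boundary when \<open>\<nu>\<close> is typical;
  and for \<open>f \<in> \<B>\<^sup>0\<^sub>\<nu>\<close> the derivative \<open>f'\<close> is approximated in \<open>H\<^sup>\<infinity>\<^sub>\<nu>\<close> by its
  dilations, which are bounded, so \<open>\<mu> |g f'|\<close> vanishes at the boundary as well.
\<close>

section \<open>Primitives on the disc and the operator \<open>S\<^sub>g\<close>\<close>

definition disc_primitive :: "(complex \<Rightarrow> complex) \<Rightarrow> complex \<Rightarrow> complex" where
  "disc_primitive k = (\<lambda>z. contour_integral (linepath 0 z) k)"

lemma disc_primitive_has_field_derivative:
  assumes k: "k holomorphic_on unit_disc" and z: "z \<in> unit_disc"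
  shows "(disc_primitive k has_field_derivative k z) (at z)"
proof -
  have "(disc_primitive k has_field_derivative k z) (at z within unit_disc)"
    unfolding disc_primitive_def
  proof (rule triangle_contour_integrals_convex_primitive)
    show "continuous_on unit_disc k"
      using k by (rule holomorphic_on_imp_continuous_on)
    fix b c assume "b \<in> unit_disc" "c \<in> unit_disc"
    then have "convex hull {0, b, c} \<subseteq> unit_disc"
      by (intro hull_minimal) (auto simp: convex_ball)
    then have "(k has_contour_integral 0) (linepath 0 b +++ linepath b c +++ linepath c 0)"
      by (intro Cauchy_theorem_triangle holomorphic_on_subset[OF k])
    then show "contour_integral (linepath 0 b) k + contour_integral (linepath b c) k +
                 contour_integral (linepath c 0) k = 0"
      by (rule has_chain_integral_chain_integral3)
  qed (use z in auto)
  then show ?thesis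
    using z by (simp add: at_within_open[of z unit_disc])
qed

lemma holomorphic_disc_primitive:
  "k holomorphic_on unit_disc \<Longrightarrow> disc_primitive k holomorphic_on unit_disc"
  using disc_primitive_has_field_derivative holomorphic_on_open[of unit_disc] by blast

lemma deriv_disc_primitive:
  "k holomorphic_on unit_disc \<Longrightarrow> z \<in> unit_disc \<Longrightarrow> deriv (disc_primitive k) z = k z"
  using disc_primitive_has_field_derivative DERIV_imp_deriv by blast

lemma disc_primitive_at_0: "disc_primitive k 0 = 0"
  by (simp add: disc_primitive_def)

lemma S_op_eq_disc_primitive: "S_op g f = disc_primitive (\<lambda>w. deriv f w * g w)"
  by (simp add: S_op_def disc_primitive_def fun_eq_iff)

lemma
  assumes g: "g holomorphic_on unit_disc" and f: "f holomorphic_on unit_disc"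
  shows holomorphic_S_op: "S_op g f holomorphic_on unit_disc"
    and S_op_at_0: "S_op g f 0 = 0"
    and deriv_S_op: "z \<in> unit_disc \<Longrightarrow> deriv (S_op g f) z = deriv f z * g z"
proof -
  have "(\<lambda>w. deriv f w * g w) holomorphic_on unit_disc"
    using f g by (intro holomorphic_intros holomorphic_deriv) auto
  then show "S_op g f holomorphic_on unit_disc" "z \<in> unit_disc \<Longrightarrow> deriv (S_op g f) z = deriv f z * g z"
    unfolding S_op_eq_disc_primitive by (simp_all add: holomorphic_disc_primitive deriv_disc_primitive)
  show "S_op g f 0 = 0"
    by (simp add: S_op_eq_disc_primitive disc_primitive_at_0)
qed

lemma holomorphic_dilation:
  assumes "h holomorphic_on unit_disc" "0 \<le> t" "t \<le> 1"
  shows "(\<lambda>w. h (of_real t * w)) holomorphic_on unit_disc"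
proof -
  have "cmod (of_real t * w) \<le> cmod w" for w
    using assms(2,3) by (simp add: norm_mult mult_left_le_one_le)
  then have "(\<lambda>w. of_real t * w) ` unit_disc \<subseteq> unit_disc"
    by (metis image_subset_iff le_less_trans mem_ball_0)
  then have "(h \<circ> (\<lambda>w. of_real t * w)) holomorphic_on unit_disc"
    by (intro holomorphic_on_compose_gen[OF _ assms(1)] holomorphic_intros)
  then show ?thesis
    by (simp add: o_def)
qed

lemma holomorphic_bounded_on_cball:
  assumes "h holomorphic_on unit_disc" "t < 1"
  obtains K where "0 \<le> K" "\<And>u. cmod u \<le> t \<Longrightarrow> cmod (h u) \<le> K"
proof -
  have "cball 0 t \<subseteq> unit_disc"
    using assms(2) by auto
  then have "compact (h ` cball 0 t)"
    using assms(1) by (intro compact_continuous_image holomorphic_on_imp_continuous_on)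
      (auto intro: holomorphic_on_subset)
  then obtain K where K: "K > 0" "\<And>x. x \<in> h ` cball 0 t \<Longrightarrow> cmod x \<le> K"
    using compact_imp_bounded bounded_pos by metis
  show ?thesis
    by (rule that[of K]) (use K in auto)
qed

section \<open>Weights and the multiplier condition\<close>

lemma weight_nonneg: "weight \<nu> \<Longrightarrow> z \<in> unit_disc \<Longrightarrow> 0 \<le> \<nu> z"
  unfolding weight_def by blast

lemma weight_antimono:
  "weight \<nu> \<Longrightarrow> z \<in> unit_disc \<Longrightarrow> w \<in> unit_disc \<Longrightarrow> cmod z \<le> cmod w \<Longrightarrow> \<nu> w \<le> \<nu> z"
  unfolding weight_def by blast

lemma weight_le_at_0: "weight \<nu> \<Longrightarrow> z \<in> unit_disc \<Longrightarrow> \<nu> z \<le> \<nu> 0"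
  by (rule weight_antimono) auto

lemma weight_eq_on_circle:
  "weight \<nu> \<Longrightarrow> z \<in> unit_disc \<Longrightarrow> w \<in> unit_disc \<Longrightarrow> cmod z = cmod w \<Longrightarrow> \<nu> z = \<nu> w"
  using weight_antimono[of \<nu> z w] weight_antimono[of \<nu> w z] by simp

definition multiplier_bound ::
  "(complex \<Rightarrow> complex) \<Rightarrow> (complex \<Rightarrow> real) \<Rightarrow> (complex \<Rightarrow> real) \<Rightarrow> real \<Rightarrow> bool" where
  "multiplier_bound g \<nu> \<mu> M \<longleftrightarrow>
     (\<forall>h. h holomorphic_on unit_disc \<longrightarrow> (\<forall>w\<in>unit_disc. \<nu> w * cmod (h w) \<le> 1) \<longrightarrow>
       (\<forall>z\<in>unit_disc. \<mu> z * cmod (g z) * cmod (h z) \<le> M))"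

lemma multiplier_bound_nonneg: "multiplier_bound g \<nu> \<mu> M \<Longrightarrow> 0 \<le> M"
  unfolding multiplier_bound_def by (metis holomorphic_on_const mult_zero_right norm_zero
      zero_le_one centre_in_ball zero_less_one)

lemma multiplier_bound_le:
  assumes \<nu>: "weight \<nu>" and M: "multiplier_bound g \<nu> \<mu> M" and h: "h holomorphic_on unit_disc"
    and B: "\<And>w. w \<in> unit_disc \<Longrightarrow> \<nu> w * cmod (h w) \<le> B" and z: "z \<in> unit_disc"
  shows "\<mu> z * cmod (g z) * cmod (h z) \<le> M * B"
proof (rule field_le_epsilon)
  fix e :: real assume e: "0 < e"
  have M0: "0 \<le> M"
    using M by (rule multiplier_bound_nonneg)
  have B0: "0 \<le> B"
    using B[of 0] mult_nonneg_nonneg[OF weight_nonneg[OF \<nu>] norm_ge_zero, of 0 "h 0"] by simp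
  define c where "c = B + e / (M + 1)"
  have c: "0 < c"
    using B0 M0 e by (simp add: c_def add_nonneg_pos)
  have "(\<lambda>w. of_real (1 / c) * h w) holomorphic_on unit_disc"
    using h by (intro holomorphic_intros)
  moreover have "\<nu> w * cmod (of_real (1 / c) * h w) \<le> 1" if "w \<in> unit_disc" for w
  proof -
    have "\<nu> w * cmod (of_real (1 / c) * h w) = \<nu> w * cmod (h w) / c"
      using c by (simp add: norm_mult norm_divide)
    also have "\<dots> \<le> B / c"
      using B[OF that] c by (simp add: divide_right_mono)
    also have "\<dots> \<le> 1"
      using c e M0 by (simp add: c_def)
    finally show ?thesis .
  qed
  ultimately have "\<mu> z * cmod (g z) * cmod (of_real (1 / c) * h z) \<le> M"
    using M z unfolding multiplier_bound_def by blast
  moreover have "cmod (of_real (1 / c) * h z) = cmod (h z) / c"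
    using c by (simp add: norm_mult norm_divide)
  ultimately have "\<mu> z * cmod (g z) * cmod (h z) \<le> M * c"
    using c by (simp add: pos_divide_le_eq)
  also have "\<dots> \<le> M * B + e"
    using M0 e by (simp add: c_def distrib_left field_simps)
  finally show "\<mu> z * cmod (g z) * cmod (h z) \<le> M * B + e" .
qed

lemma Hinf_unit_ball_eq:
  "{f \<in> Hinf \<nu>. Hinf_norm \<nu> f \<le> 1} =
     {f. f holomorphic_on unit_disc \<and> (\<forall>w\<in>unit_disc. \<nu> w * cmod (f w) \<le> 1)}"
proof (intro set_eqI iffI)
  fix f assume "f \<in> {f \<in> Hinf \<nu>. Hinf_norm \<nu> f \<le> 1}"
  then have "f holomorphic_on unit_disc" "bdd_above ((\<lambda>z. \<nu> z * cmod (f z)) ` unit_disc)"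
    "(SUP z\<in>unit_disc. \<nu> z * cmod (f z)) \<le> 1"
    by (auto simp: Hinf_def Hinf_norm_def)
  then have "\<nu> w * cmod (f w) \<le> 1" if "w \<in> unit_disc" for w
    using cSUP_upper[OF that] by fastforce
  with \<open>f holomorphic_on unit_disc\<close>
  show "f \<in> {f. f holomorphic_on unit_disc \<and> (\<forall>w\<in>unit_disc. \<nu> w * cmod (f w) \<le> 1)}"
    by blast
next
  fix f assume "f \<in> {f. f holomorphic_on unit_disc \<and> (\<forall>w\<in>unit_disc. \<nu> w * cmod (f w) \<le> 1)}"
  then have f: "f holomorphic_on unit_disc" "\<And>w. w \<in> unit_disc \<Longrightarrow> \<nu> w * cmod (f w) \<le> 1"
    by auto
  then have "bdd_above ((\<lambda>z. \<nu> z * cmod (f z)) ` unit_disc)"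
    by (intro bdd_aboveI2[of _ _ 1])
  moreover have "(SUP z\<in>unit_disc. \<nu> z * cmod (f z)) \<le> 1"
    using f by (intro cSUP_least) auto
  ultimately show "f \<in> {f \<in> Hinf \<nu>. Hinf_norm \<nu> f \<le> 1}"
    using f by (simp add: Hinf_def Hinf_norm_def)
qed

lemma ereal_divide_assoc_weight:
  assumes "0 \<le> a"
  shows "ereal a / assoc_weight \<nu> z =
           (SUP f\<in>{f \<in> Hinf \<nu>. Hinf_norm \<nu> f \<le> 1}. ereal (a * cmod (f z)))"
proof -
  let ?B = "{f \<in> Hinf \<nu>. Hinf_norm \<nu> f \<le> 1}"
  have zero: "(\<lambda>_. 0) \<in> ?B"
    by (simp add: Hinf_unit_ball_eq)
  then have "0 \<le> (SUP f\<in>?B. ereal (cmod (f z)))"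
    by (rule SUP_upper2) (simp add: zero_ereal_def)
  then have "ereal a / assoc_weight \<nu> z = ereal a * (SUP f\<in>?B. ereal (cmod (f z)))"
    by (simp add: assoc_weight_def divide_ereal_def)
  also have "\<dots> = (SUP f\<in>?B. ereal a * ereal (cmod (f z)))"
    using zero assms by (intro Sup_ereal_mult_left') auto
  finally show ?thesis
    by simp
qed

lemma SUP_assoc_weight_finite_iff:
  assumes "weight \<mu>"
  shows "(SUP z\<in>unit_disc. ereal (cmod (g z) * \<mu> z) / assoc_weight \<nu> z) < \<infinity> \<longleftrightarrow>
           (\<exists>M. multiplier_bound g \<nu> \<mu> M)"
proof -
  let ?S = "SUP z\<in>unit_disc. ereal (cmod (g z) * \<mu> z) / assoc_weight \<nu> z"
  have "?S = (SUP z\<in>unit_disc. SUP h\<in>{f \<in> Hinf \<nu>. Hinf_norm \<nu> f \<le> 1}.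
                 ereal (\<mu> z * cmod (g z) * cmod (h z)))"
    using weight_nonneg[OF assms] by (intro SUP_cong) (simp_all add: ereal_divide_assoc_weight mult_ac)
  then have le_iff: "?S \<le> ereal M \<longleftrightarrow> multiplier_bound g \<nu> \<mu> M" for M
    by (auto simp: SUP_le_iff multiplier_bound_def Hinf_unit_ball_eq)
  have "?S < \<infinity> \<longleftrightarrow> (\<exists>M. ?S \<le> ereal M)"
    by (cases ?S) auto
  then show ?thesis
    by (simp add: le_iff)
qed

section \<open>The spaces \<open>\<B>\<^sup>\<infinity>\<^sub>\<nu>\<close>\<close>

lemma Bloch_inf_deriv_le:
  assumes "f \<in> Bloch_inf \<nu>" "z \<in> unit_disc"
  shows "\<nu> z * cmod (deriv f z) \<le> Bloch_norm \<nu> f - cmod (f 0)"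
  using assms cSUP_upper[of z unit_disc "\<lambda>z. \<nu> z * cmod (deriv f z)"]
  by (simp add: Bloch_inf_def Bloch_norm_def)

lemma Bloch_norm_nonneg:
  assumes "weight \<nu>" "f \<in> Bloch_inf \<nu>"
  shows "0 \<le> Bloch_norm \<nu> f"
proof -
  have "0 \<le> \<nu> 0 * cmod (deriv f 0)"
    using weight_nonneg[OF assms(1), of 0] by simp
  then show ?thesis
    using Bloch_inf_deriv_le[OF assms(2) centre_in_ball[THEN iffD2, OF zero_less_one]]
      norm_ge_zero[of "f 0"] by linarith
qed

lemma
  assumes "f holomorphic_on unit_disc" and "\<And>z. z \<in> unit_disc \<Longrightarrow> \<nu> z * cmod (deriv f z) \<le> B"
  shows Bloch_infI: "f \<in> Bloch_inf \<nu>"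
    and Bloch_norm_le: "Bloch_norm \<nu> f \<le> cmod (f 0) + B"
proof -
  show "f \<in> Bloch_inf \<nu>"
    using assms(1) bdd_aboveI2[of unit_disc "\<lambda>z. \<nu> z * cmod (deriv f z)", OF assms(2)]
    by (simp add: Bloch_inf_def)
  have "(SUP z\<in>unit_disc. \<nu> z * cmod (deriv f z)) \<le> B"
    using assms(2) by (intro cSUP_least) auto
  then show "Bloch_norm \<nu> f \<le> cmod (f 0) + B"
    by (simp add: Bloch_norm_def)
qed

lemma
  assumes "h holomorphic_on unit_disc" and "\<forall>w\<in>unit_disc. \<nu> w * cmod (h w) \<le> 1"
  shows disc_primitive_in_Bloch_inf: "disc_primitive h \<in> Bloch_inf \<nu>"
    and Bloch_norm_disc_primitive_le: "Bloch_norm \<nu> (disc_primitive h) \<le> 1"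
  using Bloch_infI[of "disc_primitive h" \<nu> 1] Bloch_norm_le[of "disc_primitive h" \<nu> 1] assms
  by (simp_all add: holomorphic_disc_primitive deriv_disc_primitive disc_primitive_at_0)

lemma S_op_Bloch_inf:
  assumes \<nu>: "weight \<nu>" and g: "g holomorphic_on unit_disc" and M: "multiplier_bound g \<nu> \<mu> M"
    and f: "f \<in> Bloch_inf \<nu>"
  shows "S_op g f \<in> Bloch_inf \<mu>" "Bloch_norm \<mu> (S_op g f) \<le> M * Bloch_norm \<nu> f"
proof -
  have fh: "f holomorphic_on unit_disc"
    using f by (simp add: Bloch_inf_def)
  define B where "B = Bloch_norm \<nu> f - cmod (f 0)"
  have "\<mu> z * cmod (deriv (S_op g f) z) \<le> M * B" if z: "z \<in> unit_disc" for z
  proof -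
    have "\<mu> z * cmod (g z) * cmod (deriv f z) \<le> M * B"
      using Bloch_inf_deriv_le[OF f] fh unfolding B_def
      by (intro multiplier_bound_le[OF \<nu> M _ _ z] holomorphic_deriv) auto
    then show ?thesis
      using deriv_S_op[OF g fh z] by (simp add: norm_mult mult_ac)
  qed
  note Sh = holomorphic_S_op[OF g fh]
  show "S_op g f \<in> Bloch_inf \<mu>"
    by (rule Bloch_infI[OF Sh]) fact
  have "Bloch_norm \<mu> (S_op g f) \<le> M * B"
    using Bloch_norm_le[OF Sh] S_op_at_0[OF g fh] \<open>\<And>z. z \<in> unit_disc \<Longrightarrow> _\<close> by fastforce
  also have "\<dots> \<le> M * Bloch_norm \<nu> f"
    using multiplier_bound_nonneg[OF M] by (simp add: B_def mult_left_mono)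
  finally show "Bloch_norm \<mu> (S_op g f) \<le> M * Bloch_norm \<nu> f" .
qed

lemma multiplier_estimate_from_S_op:
  assumes \<nu>: "weight \<nu>" and g: "g holomorphic_on unit_disc"
    and f: "f \<in> Bloch_inf \<nu>" "Bloch_norm \<nu> f \<le> 1"
    and S: "S_op g f \<in> Bloch_inf \<mu>" "Bloch_norm \<mu> (S_op g f) \<le> C * Bloch_norm \<nu> f"
    and z: "z \<in> unit_disc"
  shows "\<mu> z * cmod (g z) * cmod (deriv f z) \<le> \<bar>C\<bar>"
proof -
  have fh: "f holomorphic_on unit_disc"
    using f by (simp add: Bloch_inf_def)
  have "\<mu> z * cmod (g z) * cmod (deriv f z) = \<mu> z * cmod (deriv (S_op g f) z)"
    using deriv_S_op[OF g fh z] by (simp add: norm_mult mult_ac)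
  also have "\<dots> \<le> Bloch_norm \<mu> (S_op g f)"
    using Bloch_inf_deriv_le[OF S(1) z] S_op_at_0[OF g fh] by simp
  also have "\<dots> \<le> C * Bloch_norm \<nu> f"
    by (rule S(2))
  also have "\<dots> \<le> \<bar>C\<bar>"
    using Bloch_norm_nonneg[OF \<nu> f(1)] f(2) mult_left_le[of "Bloch_norm \<nu> f" "\<bar>C\<bar>"]
      mult_right_mono[OF abs_ge_self, of "Bloch_norm \<nu> f" C] by linarith
  finally show ?thesis .
qed

lemma bounded_S_op_Bloch_inf_iff:
  assumes \<nu>: "weight \<nu>" and g: "g holomorphic_on unit_disc"
  shows "bounded_op (S_op g) (Bloch_inf \<nu>) (Bloch_norm \<nu>) (Bloch_inf \<mu>) (Bloch_norm \<mu>) \<longleftrightarrow>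
           (\<exists>M. multiplier_bound g \<nu> \<mu> M)"
proof
  assume "bounded_op (S_op g) (Bloch_inf \<nu>) (Bloch_norm \<nu>) (Bloch_inf \<mu>) (Bloch_norm \<mu>)"
  then obtain C where C: "\<And>f. f \<in> Bloch_inf \<nu> \<Longrightarrow>
      S_op g f \<in> Bloch_inf \<mu> \<and> Bloch_norm \<mu> (S_op g f) \<le> C * Bloch_norm \<nu> f"
    unfolding bounded_op_def by blast
  have "multiplier_bound g \<nu> \<mu> \<bar>C\<bar>"
    unfolding multiplier_bound_def
  proof (intro allI impI ballI)
    fix h z assume h: "h holomorphic_on unit_disc" "\<forall>w\<in>unit_disc. \<nu> w * cmod (h w) \<le> 1"
      and z: "z \<in> unit_disc"
    note f = disc_primitive_in_Bloch_inf[OF h] Bloch_norm_disc_primitive_le[OF h]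
    show "\<mu> z * cmod (g z) * cmod (h z) \<le> \<bar>C\<bar>"
      using multiplier_estimate_from_S_op[OF \<nu> g f C[OF f(1), THEN conjunct1]
          C[OF f(1), THEN conjunct2] z] deriv_disc_primitive[OF h(1) z] by simp
  qed
  then show "\<exists>M. multiplier_bound g \<nu> \<mu> M" ..
next
  assume "\<exists>M. multiplier_bound g \<nu> \<mu> M"
  then show "bounded_op (S_op g) (Bloch_inf \<nu>) (Bloch_norm \<nu>) (Bloch_inf \<mu>) (Bloch_norm \<mu>)"
    unfolding bounded_op_def using S_op_Bloch_inf[OF \<nu> g] by blast
qed

section \<open>The little spaces \<open>\<B>\<^sup>0\<^sub>\<nu>\<close>\<close>

definition vanishes_at_boundary :: "(complex \<Rightarrow> real) \<Rightarrow> bool" where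
  "vanishes_at_boundary \<phi> \<longleftrightarrow> (\<forall>e>0. \<exists>r<1. \<forall>z\<in>unit_disc. r < cmod z \<longrightarrow> \<phi> z < e)"

lemma Bloch_0_eq:
  "Bloch_0 \<nu> = {f. f holomorphic_on unit_disc \<and> vanishes_at_boundary (\<lambda>z. \<nu> z * cmod (deriv f z))}"
  by (simp add: Bloch_0_def vanishes_at_boundary_def)

lemma typical_weight_imp_weight: "typical_weight \<nu> \<Longrightarrow> weight \<nu>"
  by (simp add: typical_weight_def)

lemma typical_weight_vanishes: "typical_weight \<nu> \<Longrightarrow> vanishes_at_boundary \<nu>"
  unfolding typical_weight_def vanishes_at_boundary_def by (meson abs_ge_self le_less_trans)

lemma vanishes_at_boundary_le_mult:
  assumes "vanishes_at_boundary \<phi>" "0 \<le> c" "\<And>z. z \<in> unit_disc \<Longrightarrow> \<psi> z \<le> c * \<phi> z"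
  shows "vanishes_at_boundary \<psi>"
  unfolding vanishes_at_boundary_def
proof (intro allI impI)
  fix e :: real assume e: "0 < e"
  then obtain r where r: "r < 1" "\<forall>z\<in>unit_disc. r < cmod z \<longrightarrow> \<phi> z < e / (c + 1)"
    using assms(1,2) unfolding vanishes_at_boundary_def by (metis add_nonneg_pos divide_pos_pos zero_less_one)
  have "\<psi> z < e" if "z \<in> unit_disc" "r < cmod z" for z
  proof -
    have "\<psi> z \<le> c * (e / (c + 1))"
      using assms(2,3) r(2) that by (smt (verit) mult_left_mono)
    also have "\<dots> < e"
      using assms(2) e by (simp add: field_simps)
    finally show ?thesis .
  qed
  with r(1) show "\<exists>r<1. \<forall>z\<in>unit_disc. r < cmod z \<longrightarrow> \<psi> z < e"
    by blast
qed

lemma vanishes_at_boundary_imp_bdd_above: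
  assumes cont: "continuous_on unit_disc \<phi>" and van: "vanishes_at_boundary \<phi>"
  shows "bdd_above (\<phi> ` unit_disc)"
proof -
  obtain r where r: "r < 1" "\<And>z. z \<in> unit_disc \<Longrightarrow> r < cmod z \<Longrightarrow> \<phi> z < 1"
    using van unfolding vanishes_at_boundary_def by (meson zero_less_one)
  define r' where "r' = max r 0"
  have "cball 0 r' \<subseteq> unit_disc"
    using r(1) by (auto simp: r'_def)
  then have "compact (\<phi> ` cball 0 r')"
    by (intro compact_continuous_image continuous_on_subset[OF cont]) auto
  then obtain K where K: "\<And>x. x \<in> \<phi> ` cball 0 r' \<Longrightarrow> norm x \<le> K"
    using compact_imp_bounded bounded_iff by metis
  have "\<phi> z \<le> max K 1" if z: "z \<in> unit_disc" for z
  proof (cases "cmod z \<le> r'")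
    case True
    then show ?thesis
      using K[of "\<phi> z"] by auto
  next
    case False
    then have "r < cmod z"
      by (simp add: r'_def)
    then show ?thesis
      using r(2)[OF z] by simp
  qed
  then show ?thesis
    by (rule bdd_aboveI2)
qed

lemma Bloch_0_subset_Bloch_inf:
  assumes "weight \<nu>"
  shows "Bloch_0 \<nu> \<subseteq> Bloch_inf \<nu>"
proof
  fix f assume "f \<in> Bloch_0 \<nu>"
  then have f: "f holomorphic_on unit_disc" "vanishes_at_boundary (\<lambda>z. \<nu> z * cmod (deriv f z))"
    by (auto simp: Bloch_0_eq)
  have "continuous_on unit_disc (\<lambda>z. \<nu> z * cmod (deriv f z))"
    using assms f(1) unfolding weight_def
    by (intro continuous_intros holomorphic_on_imp_continuous_on holomorphic_deriv) auto
  then show "f \<in> Bloch_inf \<nu>"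
    using f vanishes_at_boundary_imp_bdd_above by (simp add: Bloch_inf_def)
qed

lemma weight_dilation_le:
  assumes \<nu>: "weight \<nu>" and h: "h holomorphic_on unit_disc" and w: "w \<in> unit_disc"
    and t: "0 \<le> t" "t \<le> 1" and B: "\<And>u. cmod u = cmod w \<Longrightarrow> \<nu> u * cmod (h u) \<le> B"
  shows "\<nu> w * cmod (h (of_real t * w)) \<le> B"
proof (cases "w = 0 \<or> \<nu> w = 0")
  case True
  then show ?thesis
    using B[of w] by auto
next
  case False
  then have w0: "w \<noteq> 0" and \<nu>w: "0 < \<nu> w"
    using weight_nonneg[OF \<nu> w] by auto
  have sub: "cball 0 (cmod w) \<subseteq> unit_disc"
    using w by auto
  have "cmod (h (of_real t * w)) \<le> B / \<nu> w"
  proof (rule maximum_modulus_frontier[of h "cball 0 (cmod w)"])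
    show "h holomorphic_on interior (cball 0 (cmod w))"
      by (rule holomorphic_on_subset[OF h]) (use w in auto)
    show "continuous_on (closure (cball 0 (cmod w))) h"
      using sub by (auto intro: holomorphic_on_imp_continuous_on holomorphic_on_subset[OF h])
    show "cmod (h u) \<le> B / \<nu> w" if "u \<in> frontier (cball 0 (cmod w))" for u
    proof -
      have u: "cmod u = cmod w" "u \<in> unit_disc"
        using that w0 w by auto
      then show ?thesis
        using B[OF u(1)] weight_eq_on_circle[OF \<nu> u(2) w u(1)] \<nu>w by (simp add: field_simps)
    qed
    show "of_real t * w \<in> cball 0 (cmod w)"
      using t by (simp add: norm_mult mult_left_le_one_le)
  qed simp
  then show ?thesis
    using \<nu>w by (simp add: field_simps)
qed

lemma
  assumes \<nu>: "typical_weight \<nu>" and h: "h holomorphic_on unit_disc"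
    and h1: "\<forall>w\<in>unit_disc. \<nu> w * cmod (h w) \<le> 1" and t: "0 \<le> t" "t < 1"
  shows disc_primitive_dilation_in_Bloch_0:
      "disc_primitive (\<lambda>w. h (of_real t * w)) \<in> Bloch_0 \<nu>"
    and Bloch_norm_disc_primitive_dilation_le:
      "Bloch_norm \<nu> (disc_primitive (\<lambda>w. h (of_real t * w))) \<le> 1"
proof -
  have wn: "weight \<nu>"
    using \<nu> by (rule typical_weight_imp_weight)
  have ht: "(\<lambda>w. h (of_real t * w)) holomorphic_on unit_disc"
    using holomorphic_dilation[OF h t(1)] t(2) by simp
  have "\<forall>w\<in>unit_disc. \<nu> w * cmod (h (of_real t * w)) \<le> 1"
    using h1 t by (auto intro!: weight_dilation_le[OF wn h])
  then show "Bloch_norm \<nu> (disc_primitive (\<lambda>w. h (of_real t * w))) \<le> 1"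
    by (rule Bloch_norm_disc_primitive_le[OF ht])
  obtain K where K: "0 \<le> K" "\<And>u. cmod u \<le> t \<Longrightarrow> cmod (h u) \<le> K"
    using holomorphic_bounded_on_cball[OF h t(2)] by blast
  have "\<nu> z * cmod (deriv (disc_primitive (\<lambda>w. h (of_real t * w))) z) \<le> K * \<nu> z"
    if z: "z \<in> unit_disc" for z
  proof -
    have "cmod (of_real t * z) \<le> t"
      using z t by (simp add: norm_mult mult_left_le)
    then have "\<nu> z * cmod (h (of_real t * z)) \<le> \<nu> z * K"
      using K(2) weight_nonneg[OF wn z] by (intro mult_left_mono)
    then show ?thesis
      using deriv_disc_primitive[OF ht z] by (simp add: mult.commute)
  qed
  then have "vanishes_at_boundary (\<lambda>z. \<nu> z * cmod (deriv (disc_primitive (\<lambda>w. h (of_real t * w))) z))"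
    using typical_weight_vanishes[OF \<nu>] K(1) by (rule vanishes_at_boundary_le_mult[rotated 2])
  then show "disc_primitive (\<lambda>w. h (of_real t * w)) \<in> Bloch_0 \<nu>"
    using ht by (simp add: Bloch_0_eq holomorphic_disc_primitive)
qed

lemma typical_weight_power_le:
  assumes \<nu>: "typical_weight \<nu>" and B: "0 < B"
  obtains n :: nat where "0 < n" "\<And>w. w \<in> unit_disc \<Longrightarrow> \<nu> w * cmod w ^ n \<le> B"
proof -
  have wn: "weight \<nu>"
    using \<nu> by (rule typical_weight_imp_weight)
  obtain \<rho> where \<rho>: "\<rho> < 1" "\<And>w. w \<in> unit_disc \<Longrightarrow> \<rho> < cmod w \<Longrightarrow> \<nu> w < B"
    using typical_weight_vanishes[OF \<nu>] B unfolding vanishes_at_boundary_def by blast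
  define \<rho>' where "\<rho>' = max \<rho> 0"
  have \<rho>': "0 \<le> \<rho>'" "\<rho>' < 1"
    using \<rho>(1) by (auto simp: \<rho>'_def)
  have \<nu>0: "0 \<le> \<nu> 0"
    using weight_nonneg[OF wn] by simp
  obtain m where m: "\<rho>' ^ m < B / (\<nu> 0 + 1)"
    using real_arch_pow_inv[of "B / (\<nu> 0 + 1)" \<rho>'] B \<nu>0 \<rho>'(2) by auto
  have "\<nu> w * cmod w ^ Suc m \<le> B" if w: "w \<in> unit_disc" for w
  proof (cases "cmod w \<le> \<rho>'")
    case True
    have "cmod w ^ Suc m = cmod w * cmod w ^ m"
      by simp
    also have "\<dots> \<le> 1 * \<rho>' ^ m"
      using True w by (intro mult_mono power_mono) auto
    finally have "\<nu> w * cmod w ^ Suc m \<le> \<nu> 0 * \<rho>' ^ m"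
      using weight_nonneg[OF wn w] weight_le_at_0[OF wn w] \<nu>0 by (intro mult_mono) auto
    also have "\<dots> \<le> \<nu> 0 * (B / (\<nu> 0 + 1))"
      using m \<nu>0 by (intro mult_left_mono) auto
    also have "\<dots> \<le> B"
      using \<nu>0 B by (simp add: field_simps)
    finally show ?thesis .
  next
    case False
    then have "\<nu> w < B"
      using \<rho>(2)[OF w] by (simp add: \<rho>'_def)
    moreover have "cmod w ^ Suc m \<le> 1"
      using w by (intro power_le_one) auto
    ultimately show ?thesis
      using weight_nonneg[OF wn w] by (smt (verit) mult_left_le)
  qed
  then show ?thesis
    using that[of "Suc m"] by blast
qed

lemma half_le_power:
  fixes x :: real
  assumes "0 < n" "1 - 1 / (2 * real n) \<le> x"
  shows "1 / 2 \<le> x ^ n"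
proof -
  have "1 + real n * (- 1 / (2 * real n)) \<le> (1 + (- 1 / (2 * real n))) ^ n"
    using assms(1) by (intro Bernoulli_inequality) (simp add: field_simps)
  also have "\<dots> \<le> x ^ n"
    using assms by (intro power_mono) (auto simp: field_simps)
  finally show ?thesis
    using assms(1) by simp
qed

lemma multiplier_bound_vanishes:
  assumes \<nu>: "typical_weight \<nu>" and \<mu>: "weight \<mu>" and M: "multiplier_bound g \<nu> \<mu> M"
  shows "vanishes_at_boundary (\<lambda>z. \<mu> z * cmod (g z))"
  unfolding vanishes_at_boundary_def
proof (intro allI impI)
  fix e :: real assume e: "0 < e"
  have M0: "0 \<le> M"
    using M by (rule multiplier_bound_nonneg)
  define B where "B = e / (2 * (M + 1))"
  obtain n where n: "0 < n" "\<And>w. w \<in> unit_disc \<Longrightarrow> \<nu> w * cmod w ^ n \<le> B"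
    using typical_weight_power_le[OF \<nu>] e M0 unfolding B_def by (metis add_nonneg_pos divide_pos_pos
        mult_pos_pos zero_less_numeral zero_less_one)
  have gz: "\<mu> z * cmod (g z) < e" if z: "z \<in> unit_disc" and rz: "1 - 1 / (2 * real n) < cmod z" for z
  proof -
    have "\<mu> z * cmod (g z) * (1 / 2) \<le> \<mu> z * cmod (g z) * cmod z ^ n"
      using half_le_power[OF n(1)] rz weight_nonneg[OF \<mu> z] by (intro mult_left_mono) auto
    also have "\<dots> \<le> M * B"
      using multiplier_bound_le[OF typical_weight_imp_weight[OF \<nu>] M
          holomorphic_on_power[OF holomorphic_on_id] _ z, of n B] n(2)
      by (simp add: norm_power)
    finally have "\<mu> z * cmod (g z) \<le> e * (M / (M + 1))"
      using M0 by (simp add: B_def field_simps)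
    also have "\<dots> < e"
      using M0 e by (simp add: field_simps)
    finally show ?thesis .
  qed
  have "1 - 1 / (2 * real n) < 1"
    using n(1) by simp
  with gz show "\<exists>r<1. \<forall>z\<in>unit_disc. r < cmod z \<longrightarrow> \<mu> z * cmod (g z) < e"
    by blast
qed

lemma dilation_close_on_cball:
  assumes h: "h holomorphic_on unit_disc" and r: "r < 1" and e: "0 < e"
  obtains t where "0 \<le> t" "t < 1" "\<And>w. cmod w \<le> r \<Longrightarrow> cmod (h w - h (of_real t * w)) < e"
proof -
  have "cball 0 r \<subseteq> unit_disc"
    using r by auto
  then have "uniformly_continuous_on (cball 0 r) h"
    by (intro compact_uniformly_continuous holomorphic_on_imp_continuous_on
        holomorphic_on_subset[OF h]) auto
  then obtain d where d: "0 < d" "\<And>x x'. x \<in> cball 0 r \<Longrightarrow> x' \<in> cball 0 r \<Longrightarrow>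
      dist x' x < d \<Longrightarrow> dist (h x') (h x) < e"
    using e unfolding uniformly_continuous_on_def by metis
  define t where "t = max 0 (1 - d / 2)"
  have t: "0 \<le> t" "t < 1" "1 - t < d"
    using d(1) by (auto simp: t_def)
  have "cmod (h w - h (of_real t * w)) < e" if w: "cmod w \<le> r" for w
  proof -
    have "dist (of_real t * w) w = cmod (of_real (t - 1) * w)"
      by (simp add: dist_norm algebra_simps)
    also have "\<dots> = (1 - t) * cmod w"
      unfolding norm_mult norm_of_real using t by simp
    also have "\<dots> < d"
      using t w r by (smt (verit) mult_left_le norm_ge_zero)
    finally show ?thesis
      using d(2)[of w "of_real t * w"] w t by (simp add: dist_norm norm_mult norm_minus_commute
          mult_left_le_one_le order.trans[OF _ w])
  qed
  with t(1,2) show ?thesis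
    using that by blast
qed

lemma dilation_approx:
  assumes \<nu>: "weight \<nu>" and h: "h holomorphic_on unit_disc"
    and van: "vanishes_at_boundary (\<lambda>w. \<nu> w * cmod (h w))" and e: "0 < e"
  obtains t where "0 \<le> t" "t < 1" "\<And>w. w \<in> unit_disc \<Longrightarrow> \<nu> w * cmod (h w - h (of_real t * w)) \<le> e"
proof -
  obtain \<rho> where \<rho>: "\<rho> < 1" "\<And>w. w \<in> unit_disc \<Longrightarrow> \<rho> < cmod w \<Longrightarrow> \<nu> w * cmod (h w) < e / 2"
    using van e unfolding vanishes_at_boundary_def by (meson half_gt_zero)
  have \<nu>0: "0 \<le> \<nu> 0"
    using weight_nonneg[OF \<nu>] by simp
  obtain t where t: "0 \<le> t" "t < 1"
    and close: "\<And>w. cmod w \<le> \<rho> \<Longrightarrow> cmod (h w - h (of_real t * w)) < e / (2 * (\<nu> 0 + 1))"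
    using dilation_close_on_cball[OF h \<rho>(1), of "e / (2 * (\<nu> 0 + 1))"] e \<nu>0 by auto
  have "\<nu> w * cmod (h w - h (of_real t * w)) \<le> e" if w: "w \<in> unit_disc" for w
  proof (cases "cmod w \<le> \<rho>")
    case True
    then have "\<nu> w * cmod (h w - h (of_real t * w)) \<le> \<nu> 0 * (e / (2 * (\<nu> 0 + 1)))"
      using less_imp_le[OF close] weight_nonneg[OF \<nu> w] weight_le_at_0[OF \<nu> w] \<nu>0
      by (intro mult_mono) auto
    also have "\<dots> \<le> e"
      using \<nu>0 e by (simp add: field_simps)
    finally show ?thesis .
  next
    case False
    then have outer: "\<nu> u * cmod (h u) \<le> e / 2" if "cmod u = cmod w" for u
      using \<rho>(2)[of u] that w by fastforce
    have "\<nu> w * cmod (h w - h (of_real t * w)) \<le> \<nu> w * cmod (h w) + \<nu> w * cmod (h (of_real t * w))"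
      using mult_left_mono[OF norm_triangle_ineq4 weight_nonneg[OF \<nu> w]] by (simp add: distrib_left)
    also have "\<dots> \<le> e / 2 + e / 2"
      using outer weight_dilation_le[OF \<nu> h w t(1) _ outer] t(2) by (intro add_mono) auto
    finally show ?thesis
      by simp
  qed
  with t(1,2) show ?thesis
    using that by blast
qed

lemma multiplier_bound_dilation_le:
  assumes \<nu>: "weight \<nu>" and \<mu>: "weight \<mu>" and M: "multiplier_bound g \<nu> \<mu> M"
    and h: "h holomorphic_on unit_disc" and t: "0 \<le> t" "t \<le> 1"
    and approx: "\<And>w. w \<in> unit_disc \<Longrightarrow> \<nu> w * cmod (h w - h (of_real t * w)) \<le> \<epsilon>"
    and z: "z \<in> unit_disc"
  shows "\<mu> z * cmod (g z) * cmod (h z) \<le> M * \<epsilon> + \<mu> z * cmod (g z) * cmod (h (of_real t * z))"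
proof -
  let ?a = "\<mu> z * cmod (g z)"
  have "?a * cmod (h z) \<le> ?a * cmod (h z - h (of_real t * z)) + ?a * cmod (h (of_real t * z))"
    using mult_left_mono[OF norm_triangle_sub[of "h z" "h (of_real t * z)"]] weight_nonneg[OF \<mu> z]
    by (simp add: distrib_left add.commute)
  also have "?a * cmod (h z - h (of_real t * z)) \<le> M * \<epsilon>"
    using h holomorphic_dilation[OF h t] approx
    by (intro multiplier_bound_le[OF \<nu> M _ _ z]) (auto intro!: holomorphic_intros)
  finally show ?thesis
    by simp
qed

lemma S_op_Bloch_0:
  assumes \<nu>: "typical_weight \<nu>" and \<mu>: "weight \<mu>" and g: "g holomorphic_on unit_disc"
    and M: "multiplier_bound g \<nu> \<mu> M" and f: "f \<in> Bloch_0 \<nu>"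
  shows "S_op g f \<in> Bloch_0 \<mu>"
proof -
  have wn: "weight \<nu>"
    using \<nu> by (rule typical_weight_imp_weight)
  have fh: "f holomorphic_on unit_disc" and van: "vanishes_at_boundary (\<lambda>z. \<nu> z * cmod (deriv f z))"
    using f by (auto simp: Bloch_0_eq)
  have hh: "deriv f holomorphic_on unit_disc"
    using fh by (intro holomorphic_deriv) auto
  have M0: "0 \<le> M"
    using M by (rule multiplier_bound_nonneg)
  have "vanishes_at_boundary (\<lambda>z. \<mu> z * cmod (deriv (S_op g f) z))"
    unfolding vanishes_at_boundary_def
  proof (intro allI impI)
    fix e :: real assume e: "0 < e"
    define \<epsilon> where "\<epsilon> = e / (M + 1)"
    have \<epsilon>: "0 < \<epsilon>"
      using e M0 by (simp add: \<epsilon>_def)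
    obtain t where t: "0 \<le> t" "t < 1"
      and approx: "\<And>w. w \<in> unit_disc \<Longrightarrow> \<nu> w * cmod (deriv f w - deriv f (of_real t * w)) \<le> \<epsilon>"
      using dilation_approx[OF wn hh van \<epsilon>] by blast
    obtain K where K: "0 \<le> K" "\<And>u. cmod u \<le> t \<Longrightarrow> cmod (deriv f u) \<le> K"
      using holomorphic_bounded_on_cball[OF hh t(2)] by blast
    obtain r where r: "r < 1" "\<And>z. z \<in> unit_disc \<Longrightarrow> r < cmod z \<Longrightarrow> \<mu> z * cmod (g z) < \<epsilon> / (K + 1)"
      using multiplier_bound_vanishes[OF \<nu> \<mu> M] \<epsilon> K(1) unfolding vanishes_at_boundary_def
      by (metis add_nonneg_pos divide_pos_pos zero_less_one)
    have "\<mu> z * cmod (deriv (S_op g f) z) < e" if z: "z \<in> unit_disc" and rz: "r < cmod z" for z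
    proof -
      have "cmod (of_real t * z) \<le> t"
        using z t by (simp add: norm_mult mult_left_le)
      then have dil: "\<mu> z * cmod (g z) * cmod (deriv f (of_real t * z)) \<le> \<mu> z * cmod (g z) * (K + 1)"
        using K(2) weight_nonneg[OF \<mu> z] by (intro mult_left_mono) force+
      have "\<mu> z * cmod (deriv (S_op g f) z) = \<mu> z * cmod (g z) * cmod (deriv f z)"
        using deriv_S_op[OF g fh z] by (simp add: norm_mult mult_ac)
      also have "\<dots> \<le> M * \<epsilon> + \<mu> z * cmod (g z) * cmod (deriv f (of_real t * z))"
        using t by (intro multiplier_bound_dilation_le[OF wn \<mu> M hh _ _ approx z]) auto
      also have "\<dots> \<le> M * \<epsilon> + \<mu> z * cmod (g z) * (K + 1)"
        using dil by simp
      also have "\<dots> < (M + 1) * \<epsilon>"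
        using r(2)[OF z rz] K(1) by (simp add: field_simps)
      also have "\<dots> = e"
        using M0 by (simp add: \<epsilon>_def)
      finally show ?thesis .
    qed
    with r(1) show "\<exists>r<1. \<forall>z\<in>unit_disc. r < cmod z \<longrightarrow> \<mu> z * cmod (deriv (S_op g f) z) < e"
      by blast
  qed
  then show ?thesis
    using holomorphic_S_op[OF g fh] by (simp add: Bloch_0_eq)
qed

lemma le_of_dilations_le:
  assumes h: "h holomorphic_on unit_disc" and z: "z \<in> unit_disc"
    and le: "\<And>t. 0 \<le> t \<Longrightarrow> t < 1 \<Longrightarrow> c * cmod (h (of_real t * z)) \<le> C"
  shows "c * cmod (h z) \<le> C"
proof (rule tendsto_upperbound)
  have "isCont h z"
    using holomorphic_on_imp_continuous_on[OF h] z by (simp add: continuous_on_eq_continuous_at)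
  have "((\<lambda>t. of_real t * z) \<longlongrightarrow> of_real 1 * z) (at_left (1::real))"
    by (intro tendsto_intros)
  then have "((\<lambda>t. h (of_real t * z)) \<longlongrightarrow> h z) (at_left (1::real))"
    using isCont_tendsto_compose[OF \<open>isCont h z\<close>] by simp
  then show "((\<lambda>t. c * cmod (h (of_real t * z))) \<longlongrightarrow> c * cmod (h z)) (at_left 1)"
    by (intro tendsto_intros)
  show "eventually (\<lambda>t. c * cmod (h (of_real t * z)) \<le> C) (at_left 1)"
    using eventually_at_left_real[OF zero_less_one] by eventually_elim (use le in auto)
qed (simp add: trivial_limit_at_left_real)

lemma bounded_S_op_Bloch_0_iff:
  assumes \<nu>: "typical_weight \<nu>" and \<mu>: "typical_weight \<mu>" and g: "g holomorphic_on unit_disc"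
  shows "bounded_op (S_op g) (Bloch_0 \<nu>) (Bloch_norm \<nu>) (Bloch_0 \<mu>) (Bloch_norm \<mu>) \<longleftrightarrow>
           (\<exists>M. multiplier_bound g \<nu> \<mu> M)"
proof -
  have wn: "weight \<nu>" and wm: "weight \<mu>"
    using \<nu> \<mu> by (simp_all add: typical_weight_imp_weight)
  show ?thesis
  proof
    assume "bounded_op (S_op g) (Bloch_0 \<nu>) (Bloch_norm \<nu>) (Bloch_0 \<mu>) (Bloch_norm \<mu>)"
    then obtain C where C: "\<And>f. f \<in> Bloch_0 \<nu> \<Longrightarrow> S_op g f \<in> Bloch_0 \<mu>"
      "\<And>f. f \<in> Bloch_0 \<nu> \<Longrightarrow> Bloch_norm \<mu> (S_op g f) \<le> C * Bloch_norm \<nu> f"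
      unfolding bounded_op_def by blast
    have "multiplier_bound g \<nu> \<mu> \<bar>C\<bar>"
      unfolding multiplier_bound_def
    proof (intro allI impI ballI)
      fix h z assume h: "h holomorphic_on unit_disc" "\<forall>w\<in>unit_disc. \<nu> w * cmod (h w) \<le> 1"
        and z: "z \<in> unit_disc"
      show "\<mu> z * cmod (g z) * cmod (h z) \<le> \<bar>C\<bar>"
      proof (rule le_of_dilations_le[OF h(1) z])
        fix t :: real assume t: "0 \<le> t" "t < 1"
        let ?f = "disc_primitive (\<lambda>w. h (of_real t * w))"
        have f: "?f \<in> Bloch_0 \<nu>" "Bloch_norm \<nu> ?f \<le> 1"
          using disc_primitive_dilation_in_Bloch_0[OF \<nu> h t]
            Bloch_norm_disc_primitive_dilation_le[OF \<nu> h t] by auto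
        have "deriv ?f z = h (of_real t * z)"
          using holomorphic_dilation[OF h(1) t(1)] t(2) z by (simp add: deriv_disc_primitive)
        then show "\<mu> z * cmod (g z) * cmod (h (of_real t * z)) \<le> \<bar>C\<bar>"
          using multiplier_estimate_from_S_op[OF wn g _ f(2) _ C(2)[OF f(1)] z]
            f(1) C(1)[OF f(1)] Bloch_0_subset_Bloch_inf[OF wn] Bloch_0_subset_Bloch_inf[OF wm] by auto
      qed
    qed
    then show "\<exists>M. multiplier_bound g \<nu> \<mu> M" ..
  next
    assume "\<exists>M. multiplier_bound g \<nu> \<mu> M"
    then show "bounded_op (S_op g) (Bloch_0 \<nu>) (Bloch_norm \<nu>) (Bloch_0 \<mu>) (Bloch_norm \<mu>)"
      unfolding bounded_op_def
      using S_op_Bloch_0[OF \<nu> wm g] S_op_Bloch_inf(2)[OF wn g] Bloch_0_subset_Bloch_inf[OF wn] by blast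
  qed
qed

theorem theorem4:
  fixes g :: "complex \<Rightarrow> complex" and \<nu> \<mu> :: "complex \<Rightarrow> real"
  assumes "g holomorphic_on unit_disc" and "weight \<nu>" and "weight \<mu>"
  shows "(bounded_op (S_op g) (Bloch_inf \<nu>) (Bloch_norm \<nu>) (Bloch_inf \<mu>) (Bloch_norm \<mu>)
            \<longleftrightarrow> (SUP z\<in>unit_disc. ereal (cmod (g z) * \<mu> z) / assoc_weight \<nu> z) < \<infinity>)
       \<and> (typical_weight \<nu> \<and> typical_weight \<mu> \<longrightarrow>
            (bounded_op (S_op g) (Bloch_0 \<nu>) (Bloch_norm \<nu>) (Bloch_0 \<mu>) (Bloch_norm \<mu>)
              \<longleftrightarrow> (SUP z\<in>unit_disc. ereal (cmod (g z) * \<mu> z) / assoc_weight \<nu> z) < \<infinity>))"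
  using SUP_assoc_weight_finite_iff[OF assms(3), of g \<nu>] bounded_S_op_Bloch_inf_iff[OF assms(2,1)]
    bounded_S_op_Bloch_0_iff[OF _ _ assms(1)] by blast

end
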